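(* Let $T,L$ be positive integers and $\epsilon\in(0,1)$. For $\rho=\{\rho_t^l\}\in[0,1]^{T\times L}$ let $F(\rho)=\sum_{t,l}\rho_t^l r_t^l b_t^l(\rho_t^l)$, $G(\rho)=1-\prod_{t=1}^T\prod_{l=1}^L\rho_t^l$, $H(\rho)=\sum_{t,l}(1-\rho_t^l)$. Let $\rho^\ast$ be an optimal solution of PA1: $\min F(\rho)$ s.t. $G(\rho)\le\epsilon$, $\rho\in[0,1]^{T\times L}$. Let $\tilde\lambda,\tilde\rho$ be optimal solutions of $\max_{\lambda\ge0}\min_{\rho\in[0,1]^{T\times L}}\{F(\rho)+\lambda[H(\rho)-\epsilon]\}$. Then $$0\le F(\tilde\rho)-F(\rho^\ast)\le\tilde\lambda\,(TL-1)\epsilon.$$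
   Context: For each $t\in\{1,\dots,T\}$, $l\in\{1,\dots,L\}$: $r_t^l$ is a positive integer and $b_t^l:[0,1]\to[0,b^l_{\max}]$ is strictly increasing and convex. $\rho_t^l$ is the probability of the event of successfully recruiting $r_t^l$ participants at time $t$, location $l$, and these events are independent. PA2 denotes the problem $\min F(\rho)$ s.t. $H(\rho)\le\epsilon$, $\rho\in[0,1]^{T\times L}$, so $F(\tilde\rho)$ is the optimal value of PA2. *)

theory Defs
  imports "HOL-Analysis.Analysis"
begin

text \<open>Index set: t in {1..T}, l in {1..L}. A decision rho is a function
  nat => nat => real, only its values on the index box matter.\<close>

definition feasible_box :: "nat \<Rightarrow> nat \<Rightarrow> (nat \<Rightarrow> nat \<Rightarrow> real) \<Rightarrow> bool" where
  "feasible_box T L \<rho> \<longleftrightarrow> (\<forall>t\<in>{1..T}. \<forall>l\<in>{1..L}. 0 \<le> \<rho> t l \<and> \<rho> t l \<le> 1)"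

definition objF :: "nat \<Rightarrow> nat \<Rightarrow> (nat \<Rightarrow> nat \<Rightarrow> nat) \<Rightarrow> (nat \<Rightarrow> nat \<Rightarrow> real \<Rightarrow> real)
    \<Rightarrow> (nat \<Rightarrow> nat \<Rightarrow> real) \<Rightarrow> real" where
  "objF T L r b \<rho> = (\<Sum>t\<in>{1..T}. \<Sum>l\<in>{1..L}. \<rho> t l * real (r t l) * b t l (\<rho> t l))"

definition consG :: "nat \<Rightarrow> nat \<Rightarrow> (nat \<Rightarrow> nat \<Rightarrow> real) \<Rightarrow> real" where
  "consG T L \<rho> = 1 - (\<Prod>t\<in>{1..T}. \<Prod>l\<in>{1..L}. \<rho> t l)"

definition consH :: "nat \<Rightarrow> nat \<Rightarrow> (nat \<Rightarrow> nat \<Rightarrow> real) \<Rightarrow> real" where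
  "consH T L \<rho> = (\<Sum>t\<in>{1..T}. \<Sum>l\<in>{1..L}. (1 - \<rho> t l))"

definition PA1_optimal where
  "PA1_optimal T L r b \<epsilon> \<rho>s \<longleftrightarrow>
     feasible_box T L \<rho>s \<and> consG T L \<rho>s \<le> \<epsilon> \<and>
     (\<forall>\<rho>. feasible_box T L \<rho> \<and> consG T L \<rho> \<le> \<epsilon> \<longrightarrow> objF T L r b \<rho>s \<le> objF T L r b \<rho>)"

definition lagr where
  "lagr T L r b \<epsilon> \<rho> lam = objF T L r b \<rho> + lam * (consH T L \<rho> - \<epsilon>)"

definition dualfun where
  "dualfun T L r b \<epsilon> lam = (INF \<rho>\<in>{\<rho>. feasible_box T L \<rho>}. lagr T L r b \<epsilon> \<rho> lam)"

definition maxmin_optimal where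
  "maxmin_optimal T L r b \<epsilon> lamt \<rho>t \<longleftrightarrow>
     0 \<le> lamt \<and> feasible_box T L \<rho>t \<and>
     (\<forall>\<rho>. feasible_box T L \<rho> \<longrightarrow> lagr T L r b \<epsilon> \<rho>t lamt \<le> lagr T L r b \<epsilon> \<rho> lamt) \<and>
     (\<forall>lam\<ge>0. dualfun T L r b \<epsilon> lam \<le> dualfun T L r b \<epsilon> lamt)"

end

theory Submission
  imports Defs
begin

text \<open>On the box \<open>G \<le> H\<close> (Weierstrass product inequality), so once the Lagrangian minimiser
  \<open>\<rho>t\<close> is PA2-feasible it is PA1-feasible, which gives the lower bound. Conversely \<open>G(\<rho>s) \<le> \<epsilon>\<close>
  forces each \<open>1 - \<rho>s t l \<le> \<epsilon>\<close>, hence \<open>H(\<rho>s) \<le> T L \<epsilon>\<close>, and comparing the Lagrangian at \<open>\<rho>t\<close>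
  and \<open>\<rho>s\<close> gives the upper bound, provided \<open>\<lambda>t (H(\<rho>t) - \<epsilon>) = 0\<close>.

  Feasibility and complementary slackness of \<open>\<rho>t\<close> are the real content. PA2 is convex with the
  Slater point \<open>\<rho> = 1\<close>, so its value function is convex and has a supporting line at \<open>\<epsilon>\<close>: strong
  duality, whence the dual optimum \<open>\<lambda>t\<close> has Lagrangian value at least the value of PA2. Since
  \<open>\<rho> b(\<rho>)\<close> is strictly convex, the midpoint of \<open>\<rho>t\<close> and a near-optimal point of PA2 shows that
  every minimising sequence of PA2 converges to \<open>\<rho>t\<close>; passing to the limit gives both claims.\<close>

lemma convex_on_supporting_line:
  fixes v :: "real \<Rightarrow> real"
  assumes conv: "convex_on {0..} v" and anti: "antimono_on {0..} v" and \<epsilon>: "0 < \<epsilon>"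
  shows "\<exists>\<mu>\<ge>0. \<forall>u\<ge>0. v \<epsilon> \<le> v u + \<mu> * (u - \<epsilon>)"
proof -
  define slope where "slope u = (v \<epsilon> - v u) / (\<epsilon> - u)" for u
  define s where "s = Sup (slope ` {0..<\<epsilon>})"
  have slope_le: "slope u \<le> (v w - v \<epsilon>) / (w - \<epsilon>)" if "0 \<le> u" "u < \<epsilon>" "\<epsilon> < w" for u w
  proof -
    have "slope u = (v u - v \<epsilon>) / (u - \<epsilon>)"
      by (simp add: slope_def divide_simps) (simp add: algebra_simps)
    also have "\<dots> \<le> (v u - v w) / (u - w)"
      using convex_on_slope_le(1)[OF conv, of u w \<epsilon>] that \<epsilon> by auto
    also have "\<dots> \<le> (v \<epsilon> - v w) / (\<epsilon> - w)"
      using convex_on_slope_le(2)[OF conv, of u w \<epsilon>] that \<epsilon> by auto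
    also have "\<dots> = (v w - v \<epsilon>) / (w - \<epsilon>)"
      by (simp add: divide_simps) (simp add: algebra_simps)
    finally show ?thesis .
  qed
  have ne: "slope ` {0..<\<epsilon>} \<noteq> {}" using \<epsilon> by auto
  have bdd: "bdd_above (slope ` {0..<\<epsilon>})"
    using slope_le[of _ "\<epsilon> + 1"] by (intro bdd_aboveI[of _ "v (\<epsilon> + 1) - v \<epsilon>"]) auto
  have s_nonpos: "s \<le> 0"
    unfolding s_def
  proof (rule cSup_least[OF ne])
    fix y assume "y \<in> slope ` {0..<\<epsilon>}"
    then obtain u where u: "0 \<le> u" "u < \<epsilon>" "y = slope u" by auto
    then have "v \<epsilon> \<le> v u" using anti \<epsilon> by (auto simp: monotone_on_def)
    then show "y \<le> 0" using u by (simp add: slope_def divide_le_0_iff)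
  qed
  have "v \<epsilon> \<le> v u + (- s) * (u - \<epsilon>)" if u: "0 \<le> u" for u
  proof (cases u \<epsilon> rule: linorder_cases)
    case less
    have "slope u \<le> s" unfolding s_def by (rule cSup_upper) (use u less bdd in auto)
    then show ?thesis using less by (simp add: slope_def divide_simps algebra_simps)
  next
    case greater
    have "s \<le> (v u - v \<epsilon>) / (u - \<epsilon>)"
      unfolding s_def by (rule cSup_least[OF ne]) (use slope_le greater in auto)
    then show ?thesis using greater by (simp add: divide_simps algebra_simps)
  qed simp
  then show ?thesis using s_nonpos by (intro exI[of _ "- s"]) auto
qed

lemma lagrange_multiplier_exists:
  fixes F H :: "'a \<Rightarrow> real"
  assumes z: "z \<in> S" "H z \<le> 0" and H_nonneg: "\<And>x. x \<in> S \<Longrightarrow> 0 \<le> H x"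
    and F_bdd: "bdd_below (F ` S)"
    and convexlike: "\<And>x y \<theta>. x \<in> S \<Longrightarrow> y \<in> S \<Longrightarrow> 0 \<le> \<theta> \<Longrightarrow> \<theta> \<le> 1 \<Longrightarrow>
      \<exists>w\<in>S. F w \<le> \<theta> * F x + (1 - \<theta>) * F y \<and> H w \<le> \<theta> * H x + (1 - \<theta>) * H y"
    and \<epsilon>: "0 < \<epsilon>"
  shows "\<exists>\<mu>\<ge>0. \<forall>x\<in>S. Inf (F ` {x\<in>S. H x \<le> \<epsilon>}) \<le> F x + \<mu> * (H x - \<epsilon>)"
proof -
  define v where "v u = Inf (F ` {x\<in>S. H x \<le> u})" for u
  have bdd: "bdd_below (F ` {x\<in>S. H x \<le> u})" for u
    using F_bdd by (rule bdd_below_mono) auto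
  have v_le: "v u \<le> F x" if "x \<in> S" "H x \<le> u" for x u
    unfolding v_def by (rule cInf_lower) (use that bdd in auto)
  have v_approx: "\<exists>x\<in>S. H x \<le> u \<and> F x < v u + e" if "0 \<le> u" "0 < e" for u e
  proof -
    have "F ` {x\<in>S. H x \<le> u} \<noteq> {}" using z that by force
    then show ?thesis
      using cInf_less_iff[OF _ bdd, of u "v u + e"] \<open>0 < e\<close> by (auto simp: v_def)
  qed
  have "convex_on {0..} v"
  proof (rule convex_onI)
    fix \<theta> u w :: real assume \<theta>: "0 < \<theta>" "\<theta> < 1" and uw: "u \<in> {0..}" "w \<in> {0..}"
    show "v ((1 - \<theta>) *\<^sub>R u + \<theta> *\<^sub>R w) \<le> (1 - \<theta>) * v u + \<theta> * v w"
    proof (rule field_le_epsilon)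
      fix e :: real assume "0 < e"
      obtain x1 where x1: "x1 \<in> S" "H x1 \<le> u" "F x1 < v u + e"
        using v_approx[of u e] uw \<open>0 < e\<close> by auto
      obtain x2 where x2: "x2 \<in> S" "H x2 \<le> w" "F x2 < v w + e"
        using v_approx[of w e] uw \<open>0 < e\<close> by auto
      obtain y where y: "y \<in> S" "F y \<le> (1 - \<theta>) * F x1 + \<theta> * F x2"
          "H y \<le> (1 - \<theta>) * H x1 + \<theta> * H x2"
        using convexlike[OF x1(1) x2(1), of "1 - \<theta>"] \<theta> by auto
      have "(1 - \<theta>) * H x1 + \<theta> * H x2 \<le> (1 - \<theta>) * u + \<theta> * w"
        using x1 x2 \<theta> by (intro add_mono mult_left_mono) auto
      then have "v ((1 - \<theta>) * u + \<theta> * w) \<le> F y" using y by (intro v_le) auto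
      also have "\<dots> \<le> (1 - \<theta>) * F x1 + \<theta> * F x2" using y by simp
      also have "\<dots> \<le> (1 - \<theta>) * (v u + e) + \<theta> * (v w + e)"
        using x1 x2 \<theta> by (intro add_mono mult_left_mono) auto
      finally show "v ((1 - \<theta>) *\<^sub>R u + \<theta> *\<^sub>R w) \<le> (1 - \<theta>) * v u + \<theta> * v w + e"
        by (simp add: algebra_simps)
    qed
  qed (rule convex_real_interval)
  moreover have "antimono_on {0..} v"
  proof (rule monotone_onI)
    fix u w :: real assume "u \<in> {0..}" "u \<le> w"
    show "v w \<le> v u"
    proof (rule field_le_epsilon)
      fix e :: real assume "0 < e"
      then obtain x where "x \<in> S" "H x \<le> u" "F x < v u + e"
        using v_approx[of u e] \<open>u \<in> {0..}\<close> by auto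
      then show "v w \<le> v u + e" using v_le[of x w] \<open>u \<le> w\<close> by auto
    qed
  qed
  ultimately obtain \<mu> where "0 \<le> \<mu>" and \<mu>: "\<And>u. 0 \<le> u \<Longrightarrow> v \<epsilon> \<le> v u + \<mu> * (u - \<epsilon>)"
    using convex_on_supporting_line \<epsilon> by blast
  have "v \<epsilon> \<le> F x + \<mu> * (H x - \<epsilon>)" if "x \<in> S" for x
    using \<mu>[OF H_nonneg[OF that]] v_le[OF that order_refl] by linarith
  with \<open>0 \<le> \<mu>\<close> show ?thesis unfolding v_def by blast
qed

lemma mono_on_diff_mult_diff_nonneg:
  fixes g :: "real \<Rightarrow> real"
  assumes "mono_on A g" "x \<in> A" "y \<in> A"
  shows "0 \<le> (x - y) * (g x - g y)"
proof (cases "x \<le> y")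
  case True
  then have "g x \<le> g y" using assms by (auto simp: monotone_on_def)
  then show ?thesis using True by (simp add: mult_nonpos_nonpos)
next
  case False
  then have "g y \<le> g x" using assms by (auto simp: monotone_on_def)
  then show ?thesis using False by simp
qed

lemma convex_on_mult_self_comb:
  fixes g :: "real \<Rightarrow> real"
  assumes conv: "convex_on {0..1} g" and x: "x \<in> {0..1}" and y: "y \<in> {0..1}"
    and \<theta>: "0 \<le> \<theta>" "\<theta> \<le> 1"
  shows "(\<theta> * x + (1 - \<theta>) * y) * g (\<theta> * x + (1 - \<theta>) * y)
    \<le> \<theta> * (x * g x) + (1 - \<theta>) * (y * g y) - \<theta> * (1 - \<theta>) * ((x - y) * (g x - g y))"
proof -
  define z where "z = \<theta> * x + (1 - \<theta>) * y"
  have "0 \<le> z" using x y \<theta> by (auto simp: z_def)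
  moreover have "g z \<le> \<theta> * g x + (1 - \<theta>) * g y"
    using convex_onD[OF conv, of "1 - \<theta>" x y] x y \<theta> by (simp add: z_def)
  ultimately have "z * g z \<le> z * (\<theta> * g x + (1 - \<theta>) * g y)" by (rule mult_left_mono[rotated])
  also have "\<dots> = \<theta> * (x * g x) + (1 - \<theta>) * (y * g y) - \<theta> * (1 - \<theta>) * ((x - y) * (g x - g y))"
    by (simp add: z_def algebra_simps)
  finally show ?thesis unfolding z_def .
qed

lemma convex_on_increment_le:
  fixes g :: "real \<Rightarrow> real"
  assumes conv: "convex_on {0..1} g" and "0 \<le> x" "x \<le> y" "y \<le> 1"
  shows "g (y - x) - g 0 \<le> g y - g x"
proof (cases "y = 0")
  case False
  then have "0 < y" using assms by simp
  have "g ((1 - x/y) *\<^sub>R 0 + (x/y) *\<^sub>R y) \<le> (1 - x/y) * g 0 + (x/y) * g y"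
    using assms \<open>0 < y\<close> by (intro convex_onD[OF conv]) auto
  moreover have "g ((1 - (y-x)/y) *\<^sub>R 0 + ((y-x)/y) *\<^sub>R y)
      \<le> (1 - (y-x)/y) * g 0 + ((y-x)/y) * g y"
    using assms \<open>0 < y\<close> by (intro convex_onD[OF conv]) auto
  moreover have "(1 - x/y) * g 0 + (x/y) * g y + ((1 - (y-x)/y) * g 0 + ((y-x)/y) * g y) = g 0 + g y"
    using \<open>0 < y\<close> by (simp add: field_simps)
  ultimately show ?thesis using \<open>0 < y\<close> by simp
qed (use assms in simp)

lemma strict_mono_convex_diff_mult_diff_ge:
  fixes g :: "real \<Rightarrow> real"
  assumes mono: "strict_mono_on {0..1} g" and conv: "convex_on {0..1} g"
    and x: "x \<in> {0..1}" and y: "y \<in> {0..1}" and d: "0 < d" "d \<le> \<bar>x - y\<bar>"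
  shows "d * (g d - g 0) \<le> (x - y) * (g x - g y)"
proof -
  have *: "d * (g d - g 0) \<le> (b - a) * (g b - g a)" if "0 \<le> a" "a \<le> b" "b \<le> 1" "d \<le> b - a" for a b
  proof -
    have "g d \<le> g (b - a)"
      using mono d that by (cases "d = b - a") (auto simp: strict_mono_on_def intro: less_imp_le)
    also have "g (b - a) - g 0 \<le> g b - g a" using convex_on_increment_le[OF conv that(1-3)] .
    finally have "g d - g 0 \<le> g b - g a" by simp
    moreover have "0 \<le> g d - g 0" using mono d that by (auto simp: strict_mono_on_def intro: less_imp_le)
    ultimately show ?thesis using that d by (intro mult_mono) auto
  qed
  show ?thesis
  proof (cases "x \<le> y")
    case True
    then show ?thesis using *[of x y] x y d by (simp add: algebra_simps)
  next
    case False
    then show ?thesis using *[of y x] x y d by auto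
  qed
qed

lemma strict_mono_convex_tendsto_of_diff_mult_diff:
  fixes g :: "real \<Rightarrow> real" and x :: "nat \<Rightarrow> real"
  assumes mono: "strict_mono_on {0..1} g" and conv: "convex_on {0..1} g"
    and x: "\<And>n. x n \<in> {0..1}" and y: "y \<in> {0..1}"
    and lim: "(\<lambda>n. (x n - y) * (g (x n) - g y)) \<longlonglongrightarrow> 0"
  shows "x \<longlonglongrightarrow> y"
proof (rule tendstoI)
  fix e :: real assume "0 < e"
  define d where "d = min e 1"
  have d: "0 < d" "d \<le> 1" "d \<le> e" using \<open>0 < e\<close> by (auto simp: d_def)
  then have "g 0 < g d" using mono by (auto simp: strict_mono_on_def)
  with d have "0 < d * (g d - g 0)" by simp
  with lim have "eventually (\<lambda>n. (x n - y) * (g (x n) - g y) < d * (g d - g 0)) sequentially"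
    by (rule order_tendstoD)
  then show "eventually (\<lambda>n. dist (x n) y < e) sequentially"
  proof eventually_elim
    case (elim n)
    then have "\<bar>x n - y\<bar> < d"
      using strict_mono_convex_diff_mult_diff_ge[OF mono conv x[of n] y d(1)] by (meson leD not_le_imp_less)
    then show ?case using d by (simp add: dist_real_def)
  qed
qed

lemma one_minus_prod_le_sum:
  fixes f :: "'a \<Rightarrow> real"
  assumes "\<And>i. i \<in> A \<Longrightarrow> 0 \<le> f i \<and> f i \<le> 1"
  shows "1 - prod f A \<le> (\<Sum>i\<in>A. 1 - f i)"
  using assms
proof (induction A rule: infinite_finite_induct)
  case (insert a A)
  have "0 \<le> prod f A" "prod f A \<le> 1" "0 \<le> f a" "f a \<le> 1"
    using insert by (auto intro: prod_nonneg prod_le_1)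
  then have "1 - f a * prod f A \<le> (1 - f a) + (1 - prod f A)"
    using mult_nonneg_nonneg[of "1 - f a" "1 - prod f A"] by (simp add: algebra_simps)
  then show ?case using insert by simp
qed auto

lemma prod_le_member:
  fixes f :: "'a \<Rightarrow> real"
  assumes "finite A" "a \<in> A" "\<And>i. i \<in> A \<Longrightarrow> 0 \<le> f i \<and> f i \<le> 1"
  shows "prod f A \<le> f a"
proof -
  have "prod f A = f a * prod f (A - {a})" using assms by (simp add: prod.remove)
  also have "\<dots> \<le> f a" using assms by (intro mult_left_le prod_le_1) auto
  finally show ?thesis .
qed

definition comb :: "real \<Rightarrow> (nat \<Rightarrow> nat \<Rightarrow> real) \<Rightarrow> (nat \<Rightarrow> nat \<Rightarrow> real) \<Rightarrow> nat \<Rightarrow> nat \<Rightarrow> real" where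
  "comb \<theta> x y = (\<lambda>t l. \<theta> * x t l + (1 - \<theta>) * y t l)"

lemma feasible_box_comb:
  assumes "feasible_box T L x" "feasible_box T L y" "0 \<le> \<theta>" "\<theta> \<le> 1"
  shows "feasible_box T L (comb \<theta> x y)"
proof -
  have "0 \<le> \<theta> * a + (1 - \<theta>) * c \<and> \<theta> * a + (1 - \<theta>) * c \<le> 1"
    if "0 \<le> a" "a \<le> 1" "0 \<le> c" "c \<le> 1" for a c
    using convex_bound_le[of a 1 c \<theta> "1 - \<theta>"] that assms(3,4) by simp
  then show ?thesis using assms(1,2) by (simp add: feasible_box_def comb_def)
qed

lemma consH_comb: "consH T L (comb \<theta> x y) = \<theta> * consH T L x + (1 - \<theta>) * consH T L y"
proof -
  have "consH T L (comb \<theta> x y)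
      = (\<Sum>t\<in>{1..T}. \<Sum>l\<in>{1..L}. \<theta> * (1 - x t l) + (1 - \<theta>) * (1 - y t l))"
    unfolding consH_def comb_def by (intro sum.cong refl) (simp add: algebra_simps)
  then show ?thesis by (simp add: consH_def sum.distrib sum_distrib_left)
qed

lemma consH_nonneg: "feasible_box T L \<rho> \<Longrightarrow> 0 \<le> consH T L \<rho>"
  unfolding consH_def feasible_box_def by (intro sum_nonneg) auto

lemma consG_le_consH:
  assumes "feasible_box T L \<rho>"
  shows "consG T L \<rho> \<le> consH T L \<rho>"
proof -
  have "consG T L \<rho> \<le> (\<Sum>t\<in>{1..T}. 1 - (\<Prod>l\<in>{1..L}. \<rho> t l))"
    unfolding consG_def
    by (rule one_minus_prod_le_sum) (use assms in \<open>auto simp: feasible_box_def intro: prod_nonneg prod_le_1\<close>)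
  also have "\<dots> \<le> consH T L \<rho>"
    unfolding consH_def
    by (intro sum_mono one_minus_prod_le_sum) (use assms in \<open>auto simp: feasible_box_def\<close>)
  finally show ?thesis .
qed

lemma consH_le_of_consG_le:
  assumes "feasible_box T L \<rho>" "consG T L \<rho> \<le> \<epsilon>"
  shows "consH T L \<rho> \<le> real (T * L) * \<epsilon>"
proof -
  have "1 - \<rho> t l \<le> \<epsilon>" if "t \<in> {1..T}" "l \<in> {1..L}" for t l
  proof -
    have "(\<Prod>t\<in>{1..T}. \<Prod>l\<in>{1..L}. \<rho> t l) \<le> (\<Prod>l\<in>{1..L}. \<rho> t l)"
      by (rule prod_le_member)
        (use that assms(1) in \<open>auto simp: feasible_box_def intro: prod_nonneg prod_le_1\<close>)
    also have "\<dots> \<le> \<rho> t l"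
      by (rule prod_le_member) (use that assms(1) in \<open>auto simp: feasible_box_def\<close>)
    finally show ?thesis using assms(2) by (simp add: consG_def)
  qed
  then have "consH T L \<rho> \<le> (\<Sum>t\<in>{1..T}. \<Sum>l\<in>{1..L}. \<epsilon>)"
    unfolding consH_def by (intro sum_mono) auto
  then show ?thesis by simp
qed

definition objF_gap :: "nat \<Rightarrow> nat \<Rightarrow> (nat \<Rightarrow> nat \<Rightarrow> nat) \<Rightarrow> (nat \<Rightarrow> nat \<Rightarrow> real \<Rightarrow> real)
    \<Rightarrow> (nat \<Rightarrow> nat \<Rightarrow> real) \<Rightarrow> (nat \<Rightarrow> nat \<Rightarrow> real) \<Rightarrow> real" where
  "objF_gap T L r b x y =
     (\<Sum>t\<in>{1..T}. \<Sum>l\<in>{1..L}. real (r t l) * ((x t l - y t l) * (b t l (x t l) - b t l (y t l))))"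

definition PA2_value :: "nat \<Rightarrow> nat \<Rightarrow> (nat \<Rightarrow> nat \<Rightarrow> nat) \<Rightarrow> (nat \<Rightarrow> nat \<Rightarrow> real \<Rightarrow> real)
    \<Rightarrow> real \<Rightarrow> real" where
  "PA2_value T L r b \<epsilon> = Inf (objF T L r b ` {\<rho>. feasible_box T L \<rho> \<and> consH T L \<rho> \<le> \<epsilon>})"

locale recruitment =
  fixes T L :: nat and r :: "nat \<Rightarrow> nat \<Rightarrow> nat" and b :: "nat \<Rightarrow> nat \<Rightarrow> real \<Rightarrow> real"
  assumes r_pos: "\<And>t l. t \<in> {1..T} \<Longrightarrow> l \<in> {1..L} \<Longrightarrow> 0 < r t l"
    and b_nonneg: "\<And>t l x. t \<in> {1..T} \<Longrightarrow> l \<in> {1..L} \<Longrightarrow> x \<in> {0..1} \<Longrightarrow> 0 \<le> b t l x"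
    and b_strict_mono: "\<And>t l. t \<in> {1..T} \<Longrightarrow> l \<in> {1..L} \<Longrightarrow> strict_mono_on {0..1} (b t l)"
    and b_convex: "\<And>t l. t \<in> {1..T} \<Longrightarrow> l \<in> {1..L} \<Longrightarrow> convex_on {0..1} (b t l)"
begin

lemma objF_nonneg: "feasible_box T L \<rho> \<Longrightarrow> 0 \<le> objF T L r b \<rho>"
  unfolding objF_def feasible_box_def by (intro sum_nonneg mult_nonneg_nonneg b_nonneg) auto

lemma objF_gap_term_nonneg:
  assumes "feasible_box T L x" "feasible_box T L y" "t \<in> {1..T}" "l \<in> {1..L}"
  shows "0 \<le> real (r t l) * ((x t l - y t l) * (b t l (x t l) - b t l (y t l)))"
  using assms mono_on_diff_mult_diff_nonneg[OF strict_mono_on_imp_mono_on[OF b_strict_mono]]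
  by (simp add: feasible_box_def)

lemma objF_gap_term_le:
  assumes "feasible_box T L x" "feasible_box T L y" "t \<in> {1..T}" "l \<in> {1..L}"
  shows "real (r t l) * ((x t l - y t l) * (b t l (x t l) - b t l (y t l))) \<le> objF_gap T L r b x y"
proof -
  let ?g = "\<lambda>t l. real (r t l) * ((x t l - y t l) * (b t l (x t l) - b t l (y t l)))"
  have "?g t l \<le> (\<Sum>l\<in>{1..L}. ?g t l)"
    by (rule member_le_sum) (use assms objF_gap_term_nonneg in auto)
  also have "\<dots> \<le> (\<Sum>t\<in>{1..T}. \<Sum>l\<in>{1..L}. ?g t l)"
    by (rule member_le_sum) (use assms objF_gap_term_nonneg in \<open>auto intro!: sum_nonneg\<close>)
  finally show ?thesis by (simp add: objF_gap_def)
qed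

lemma objF_gap_nonneg: "feasible_box T L x \<Longrightarrow> feasible_box T L y \<Longrightarrow> 0 \<le> objF_gap T L r b x y"
  unfolding objF_gap_def by (intro sum_nonneg) (use objF_gap_term_nonneg in auto)

lemma objF_comb_le:
  assumes x: "feasible_box T L x" and y: "feasible_box T L y" and \<theta>: "0 \<le> \<theta>" "\<theta> \<le> 1"
  shows "objF T L r b (comb \<theta> x y)
    \<le> \<theta> * objF T L r b x + (1 - \<theta>) * objF T L r b y - \<theta> * (1 - \<theta>) * objF_gap T L r b x y"
proof -
  have "objF T L r b (comb \<theta> x y) \<le> (\<Sum>t\<in>{1..T}. \<Sum>l\<in>{1..L}. real (r t l) *
      (\<theta> * (x t l * b t l (x t l)) + (1 - \<theta>) * (y t l * b t l (y t l))
       - \<theta> * (1 - \<theta>) * ((x t l - y t l) * (b t l (x t l) - b t l (y t l)))))"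
    unfolding objF_def comb_def
  proof (intro sum_mono)
    fix t l assume tl: "t \<in> {1..T}" "l \<in> {1..L}"
    have "(\<theta> * x t l + (1 - \<theta>) * y t l) * b t l (\<theta> * x t l + (1 - \<theta>) * y t l)
      \<le> \<theta> * (x t l * b t l (x t l)) + (1 - \<theta>) * (y t l * b t l (y t l))
       - \<theta> * (1 - \<theta>) * ((x t l - y t l) * (b t l (x t l) - b t l (y t l)))"
      using x y tl \<theta> by (intro convex_on_mult_self_comb b_convex) (auto simp: feasible_box_def)
    then show "(\<theta> * x t l + (1 - \<theta>) * y t l) * real (r t l) * b t l (\<theta> * x t l + (1 - \<theta>) * y t l)
      \<le> real (r t l) * (\<theta> * (x t l * b t l (x t l)) + (1 - \<theta>) * (y t l * b t l (y t l))
       - \<theta> * (1 - \<theta>) * ((x t l - y t l) * (b t l (x t l) - b t l (y t l))))"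
      by (simp add: mult_left_mono mult.commute mult.left_commute)
  qed
  also have "\<dots> = \<theta> * objF T L r b x + (1 - \<theta>) * objF T L r b y - \<theta> * (1 - \<theta>) * objF_gap T L r b x y"
    by (simp add: objF_def objF_gap_def sum.distrib sum_distrib_left sum_subtractf algebra_simps)
  finally show ?thesis .
qed

lemma objF_gap_le_lagr_excess:
  assumes x: "feasible_box T L x" and y: "feasible_box T L y"
    and y_min: "\<And>\<rho>. feasible_box T L \<rho> \<Longrightarrow> lagr T L r b \<epsilon> y lam \<le> lagr T L r b \<epsilon> \<rho> lam"
  shows "objF_gap T L r b x y \<le> 2 * (lagr T L r b \<epsilon> x lam - lagr T L r b \<epsilon> y lam)"
proof -
  define m where "m = comb (1/2) x y"
  have "lagr T L r b \<epsilon> y lam \<le> lagr T L r b \<epsilon> m lam"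
    using y_min feasible_box_comb[OF x y] by (simp add: m_def)
  moreover have "objF T L r b m
      \<le> objF T L r b x / 2 + objF T L r b y / 2 - objF_gap T L r b x y / 4"
    using objF_comb_le[OF x y, of "1/2"] by (simp add: m_def)
  moreover have "lam * (consH T L m - \<epsilon>)
      = (lam * (consH T L x - \<epsilon>) + lam * (consH T L y - \<epsilon>)) / 2"
    by (simp add: m_def consH_comb algebra_simps)
  ultimately show ?thesis unfolding lagr_def by argo
qed

lemma consH_tendsto_of_objF_gap_tendsto_zero:
  assumes x: "\<And>n. feasible_box T L (x n)" and y: "feasible_box T L y"
    and gap: "(\<lambda>n. objF_gap T L r b (x n) y) \<longlonglongrightarrow> 0"
  shows "(\<lambda>n. consH T L (x n)) \<longlonglongrightarrow> consH T L y"
proof -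
  have "(\<lambda>n. x n t l) \<longlonglongrightarrow> y t l" if tl: "t \<in> {1..T}" "l \<in> {1..L}" for t l
  proof -
    define g where "g n = real (r t l) * ((x n t l - y t l) * (b t l (x n t l) - b t l (y t l)))" for n
    have "g \<longlonglongrightarrow> 0"
    proof (rule real_tendsto_sandwich[OF _ _ tendsto_const gap])
      show "eventually (\<lambda>n. 0 \<le> g n) sequentially"
        using objF_gap_term_nonneg[OF x y tl] by (simp add: g_def)
      show "eventually (\<lambda>n. g n \<le> objF_gap T L r b (x n) y) sequentially"
        using objF_gap_term_le[OF x y tl] by (simp add: g_def)
    qed
    then have "(\<lambda>n. g n / real (r t l)) \<longlonglongrightarrow> 0" by (rule tendsto_divide_zero)
    then have lim: "(\<lambda>n. (x n t l - y t l) * (b t l (x n t l) - b t l (y t l))) \<longlonglongrightarrow> 0"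
      using r_pos[OF tl] by (simp add: g_def)
    show ?thesis
      by (rule strict_mono_convex_tendsto_of_diff_mult_diff[OF b_strict_mono[OF tl] b_convex[OF tl] _ _ lim])
        (use x y tl in \<open>auto simp: feasible_box_def\<close>)
  qed
  then show ?thesis
    unfolding consH_def by (intro tendsto_sum tendsto_diff tendsto_const) auto
qed

lemma PA2_value_le_maxmin_value:
  assumes \<epsilon>: "0 < \<epsilon>" and mm: "maxmin_optimal T L r b \<epsilon> lamt \<rho>t"
  shows "PA2_value T L r b \<epsilon> \<le> lagr T L r b \<epsilon> \<rho>t lamt"
proof -
  let ?S = "{\<rho>. feasible_box T L \<rho>}"
  have one: "feasible_box T L (\<lambda>t l. 1)" "consH T L (\<lambda>t l. 1) = 0"
    by (simp_all add: feasible_box_def consH_def)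
  have "\<exists>w\<in>?S. objF T L r b w \<le> \<theta> * objF T L r b x + (1 - \<theta>) * objF T L r b y
      \<and> consH T L w \<le> \<theta> * consH T L x + (1 - \<theta>) * consH T L y"
    if "x \<in> ?S" "y \<in> ?S" "0 \<le> \<theta>" "\<theta> \<le> 1" for x y \<theta>
  proof (intro bexI conjI)
    have "0 \<le> \<theta> * (1 - \<theta>) * objF_gap T L r b x y"
      using that objF_gap_nonneg[of x y] by simp
    then show "objF T L r b (comb \<theta> x y) \<le> \<theta> * objF T L r b x + (1 - \<theta>) * objF T L r b y"
      using objF_comb_le[of x y \<theta>] that by simp
  qed (use that feasible_box_comb in \<open>auto simp: consH_comb\<close>)
  moreover have "bdd_below (objF T L r b ` ?S)"
    by (rule bdd_belowI[of _ 0]) (auto intro: objF_nonneg)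
  ultimately obtain lam0 where "0 \<le> lam0" and lam0: "\<And>x. feasible_box T L x \<Longrightarrow>
      PA2_value T L r b \<epsilon> \<le> lagr T L r b \<epsilon> x lam0"
    using lagrange_multiplier_exists[of "\<lambda>t l. 1" ?S "consH T L" "objF T L r b"] one \<epsilon> consH_nonneg
    by (force simp: PA2_value_def lagr_def)
  have lagr_min: "\<And>\<rho>. feasible_box T L \<rho> \<Longrightarrow> lagr T L r b \<epsilon> \<rho>t lamt \<le> lagr T L r b \<epsilon> \<rho> lamt"
    and "feasible_box T L \<rho>t" and dual_max: "dualfun T L r b \<epsilon> lam0 \<le> dualfun T L r b \<epsilon> lamt"
    using mm \<open>0 \<le> lam0\<close> by (auto simp: maxmin_optimal_def)
  have "PA2_value T L r b \<epsilon> \<le> dualfun T L r b \<epsilon> lam0"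
    unfolding dualfun_def by (rule cINF_greatest) (use one lam0 in auto)
  also note dual_max
  also have "dualfun T L r b \<epsilon> lamt \<le> lagr T L r b \<epsilon> \<rho>t lamt"
    unfolding dualfun_def
    by (rule cINF_lower) (use \<open>feasible_box T L \<rho>t\<close> lagr_min in \<open>auto intro!: bdd_belowI\<close>)
  finally show ?thesis .
qed

lemma maxmin_optimal_complementary_slackness:
  assumes \<epsilon>: "0 < \<epsilon>" and mm: "maxmin_optimal T L r b \<epsilon> lamt \<rho>t"
  shows "consH T L \<rho>t \<le> \<epsilon> \<and> lamt * (consH T L \<rho>t - \<epsilon>) = 0"
proof -
  define p where "p = PA2_value T L r b \<epsilon>"
  define Lt where "Lt = lagr T L r b \<epsilon> \<rho>t lamt"
  have "0 \<le> lamt" and \<rho>t: "feasible_box T L \<rho>t"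
    and lagr_min: "\<And>\<rho>. feasible_box T L \<rho> \<Longrightarrow> Lt \<le> lagr T L r b \<epsilon> \<rho> lamt"
    using mm by (auto simp: maxmin_optimal_def Lt_def)
  have "p \<le> Lt" using PA2_value_le_maxmin_value[OF \<epsilon> mm] by (simp add: p_def Lt_def)
  have "\<exists>x. feasible_box T L x \<and> consH T L x \<le> \<epsilon> \<and> objF T L r b x < p + inverse (real (Suc n))" for n
  proof -
    let ?V = "objF T L r b ` {\<rho>. feasible_box T L \<rho> \<and> consH T L \<rho> \<le> \<epsilon>}"
    have "objF T L r b (\<lambda>t l. 1) \<in> ?V" using \<epsilon> by (auto simp: feasible_box_def consH_def)
    moreover have "bdd_below ?V" by (rule bdd_belowI[of _ 0]) (auto intro: objF_nonneg)
    ultimately show ?thesis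
      using cInf_less_iff[of ?V "p + inverse (real (Suc n))"] by (auto simp: p_def PA2_value_def)
  qed
  then obtain x where x: "\<And>n. feasible_box T L (x n)" and Hx: "\<And>n. consH T L (x n) \<le> \<epsilon>"
    and Fx: "\<And>n. objF T L r b (x n) < p + inverse (real (Suc n))"
    by metis
  have slack_approx: "0 \<le> lamt * (consH T L (x n) - \<epsilon>) + inverse (real (Suc n))" for n
    using lagr_min[OF x[of n]] Fx[of n] \<open>p \<le> Lt\<close> by (simp add: lagr_def)
  have gap_le: "objF_gap T L r b (x n) \<rho>t \<le> 2 * inverse (real (Suc n))" for n
  proof -
    have "objF_gap T L r b (x n) \<rho>t \<le> 2 * (lagr T L r b \<epsilon> (x n) lamt - Lt)"
      using objF_gap_le_lagr_excess[OF x[of n] \<rho>t] lagr_min unfolding Lt_def by blast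
    moreover have "lamt * (consH T L (x n) - \<epsilon>) \<le> 0"
      using \<open>0 \<le> lamt\<close> Hx[of n] by (simp add: mult_nonneg_nonpos)
    ultimately show ?thesis
      using Fx[of n] \<open>p \<le> Lt\<close> unfolding lagr_def by argo
  qed
  have "(\<lambda>n. objF_gap T L r b (x n) \<rho>t) \<longlonglongrightarrow> 0"
  proof (rule real_tendsto_sandwich)
    show "eventually (\<lambda>n. 0 \<le> objF_gap T L r b (x n) \<rho>t) sequentially"
      using objF_gap_nonneg[OF x \<rho>t] by simp
    show "eventually (\<lambda>n. objF_gap T L r b (x n) \<rho>t \<le> 2 * inverse (real (Suc n))) sequentially"
      using gap_le by simp
    show "(\<lambda>n. 2 * inverse (real (Suc n))) \<longlonglongrightarrow> 0"
      using tendsto_mult_right_zero[OF LIMSEQ_inverse_real_of_nat] by simp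
  qed simp
  then have H_lim: "(\<lambda>n. consH T L (x n)) \<longlonglongrightarrow> consH T L \<rho>t"
    by (rule consH_tendsto_of_objF_gap_tendsto_zero[OF x \<rho>t])
  have "consH T L \<rho>t \<le> \<epsilon>" by (rule tendsto_upperbound[OF H_lim]) (simp_all add: Hx)
  moreover have "0 \<le> lamt * (consH T L \<rho>t - \<epsilon>)"
  proof (rule tendsto_lowerbound)
    show "(\<lambda>n. lamt * (consH T L (x n) - \<epsilon>) + inverse (real (Suc n)))
        \<longlonglongrightarrow> lamt * (consH T L \<rho>t - \<epsilon>)"
      using tendsto_add[OF tendsto_mult_left[OF tendsto_diff[OF H_lim tendsto_const]]
          LIMSEQ_inverse_real_of_nat, of lamt \<epsilon>] by simp
  qed (blast intro: always_eventually slack_approx, simp)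
  moreover have "lamt * (consH T L \<rho>t - \<epsilon>) \<le> 0"
    using \<open>0 \<le> lamt\<close> calculation(1) by (simp add: mult_nonneg_nonpos)
  ultimately show ?thesis by simp
qed

end

theorem theorem2:
  fixes T L :: nat and \<epsilon> :: real
    and r :: "nat \<Rightarrow> nat \<Rightarrow> nat" and b :: "nat \<Rightarrow> nat \<Rightarrow> real \<Rightarrow> real"
    and bmax :: "nat \<Rightarrow> real"
    and \<rho>s \<rho>t :: "nat \<Rightarrow> nat \<Rightarrow> real" and lamt :: real
  assumes "T \<ge> 1" and "L \<ge> 1"
    and "0 < \<epsilon>" and "\<epsilon> < 1"
    and "\<And>t l. t \<in> {1..T} \<Longrightarrow> l \<in> {1..L} \<Longrightarrow> r t l > 0"
    and "\<And>t l. t \<in> {1..T} \<Longrightarrow> l \<in> {1..L} \<Longrightarrow> b t l ` {0..1} \<subseteq> {0..bmax l}"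
    and "\<And>t l. t \<in> {1..T} \<Longrightarrow> l \<in> {1..L} \<Longrightarrow> strict_mono_on {0..1} (b t l)"
    and "\<And>t l. t \<in> {1..T} \<Longrightarrow> l \<in> {1..L} \<Longrightarrow> convex_on {0..1} (b t l)"
    and "PA1_optimal T L r b \<epsilon> \<rho>s"
    and "maxmin_optimal T L r b \<epsilon> lamt \<rho>t"
  shows "0 \<le> objF T L r b \<rho>t - objF T L r b \<rho>s
    \<and> objF T L r b \<rho>t - objF T L r b \<rho>s \<le> lamt * (real (T * L) - 1) * \<epsilon>"
proof -
  interpret recruitment T L r b
    using assms(5-8) by unfold_locales (auto simp: image_subset_iff)
  have \<rho>s: "feasible_box T L \<rho>s" "consG T L \<rho>s \<le> \<epsilon>"
    and PA1_min: "\<And>\<rho>. feasible_box T L \<rho> \<Longrightarrow> consG T L \<rho> \<le> \<epsilon> \<Longrightarrow> objF T L r b \<rho>s \<le> objF T L r b \<rho>"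
    using assms(9) by (auto simp: PA1_optimal_def)
  have "0 \<le> lamt" and \<rho>t: "feasible_box T L \<rho>t"
    and lagr_min: "lagr T L r b \<epsilon> \<rho>t lamt \<le> lagr T L r b \<epsilon> \<rho>s lamt"
    using assms(10) \<rho>s by (auto simp: maxmin_optimal_def)
  have H\<rho>t: "consH T L \<rho>t \<le> \<epsilon>" and slack: "lamt * (consH T L \<rho>t - \<epsilon>) = 0"
    using maxmin_optimal_complementary_slackness[OF assms(3,10)] by auto
  have "objF T L r b \<rho>s \<le> objF T L r b \<rho>t"
    using PA1_min[OF \<rho>t] consG_le_consH[OF \<rho>t] H\<rho>t by linarith
  moreover have "lamt * (consH T L \<rho>s - \<epsilon>) \<le> lamt * (real (T * L) * \<epsilon> - \<epsilon>)"
    using consH_le_of_consG_le[OF \<rho>s] \<open>0 \<le> lamt\<close> by (intro mult_left_mono) auto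
  moreover have "lamt * (real (T * L) * \<epsilon> - \<epsilon>) = lamt * (real (T * L) - 1) * \<epsilon>"
    by (simp add: algebra_simps)
  ultimately show ?thesis
    using lagr_min slack unfolding lagr_def by linarith
qed

end
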